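(* Let $R$ be a finite rack with two decompositions $R=S_1\cup T_1$ and $R=S_2\cup T_2$. If $T_1\cong T_2$ and the subracks $S_1$ and $S_2$ are connected, then $S_1\cong S_2$.
   Context: A rack is a set $R$ with a binary operation $\rhd$ such that every left multiplication $\ell_a\colon b\mapsto a\rhd b$ is a bijection and $a\rhd(b\rhd c)=(a\rhd b)\rhd(a\rhd c)$ for all $a,b,c$. A subrack of $R$ is a subset $S$ with $\ell_s(S)=S$ for all $s\in S$, regarded as a rack with the restricted operation. A decomposition $R=S\cup T$ means that $S$ and $T$ are disjoint non-empty subracks whose union is $R$. The inner automorphism group $\mathrm{Inn}(R)$ is the subgroup of the symmetric group on $R$ generated by all $\ell_a$; a rack is connected if it is non-empty and $\mathrm{Inn}(R)$ acts transitively on it. *)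

theory Defs
  imports Main
begin

definition rack :: "'a set \<Rightarrow> ('a \<Rightarrow> 'a \<Rightarrow> 'a) \<Rightarrow> bool" where
  "rack X op \<longleftrightarrow>
     (\<forall>a\<in>X. bij_betw (op a) X X) \<and>
     (\<forall>a\<in>X. \<forall>b\<in>X. \<forall>c\<in>X. op a (op b c) = op (op a b) (op a c))"

definition subrack :: "'a set \<Rightarrow> ('a \<Rightarrow> 'a \<Rightarrow> 'a) \<Rightarrow> 'a set \<Rightarrow> bool" where
  "subrack X op S \<longleftrightarrow> S \<subseteq> X \<and> (\<forall>s\<in>S. op s ` S = S)"

definition decomposition :: "'a set \<Rightarrow> ('a \<Rightarrow> 'a \<Rightarrow> 'a) \<Rightarrow> 'a set \<Rightarrow> 'a set \<Rightarrow> bool" where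
  "decomposition X op S T \<longleftrightarrow>
     subrack X op S \<and> subrack X op T \<and> S \<noteq> {} \<and> T \<noteq> {} \<and> S \<inter> T = {} \<and> S \<union> T = X"

text \<open>Orbit of x under Inn(X): closure under all left multiplications and their inverses
  (the group generated by the l_a, acting on X).\<close>
inductive_set inn_orbit :: "'a set \<Rightarrow> ('a \<Rightarrow> 'a \<Rightarrow> 'a) \<Rightarrow> 'a \<Rightarrow> 'a set"
  for X :: "'a set" and op :: "'a \<Rightarrow> 'a \<Rightarrow> 'a" and x :: 'a where
  base: "x \<in> X \<Longrightarrow> x \<in> inn_orbit X op x"
| left: "y \<in> inn_orbit X op x \<Longrightarrow> a \<in> X \<Longrightarrow> op a y \<in> inn_orbit X op x"
| left_inv: "y \<in> inn_orbit X op x \<Longrightarrow> a \<in> X \<Longrightarrow> the_inv_into X (op a) y \<in> inn_orbit X op x"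

definition connected_rack :: "'a set \<Rightarrow> ('a \<Rightarrow> 'a \<Rightarrow> 'a) \<Rightarrow> bool" where
  "connected_rack X op \<longleftrightarrow> X \<noteq> {} \<and> (\<forall>x\<in>X. \<forall>y\<in>X. y \<in> inn_orbit X op x)"

definition rack_iso :: "'a set \<Rightarrow> ('a \<Rightarrow> 'a \<Rightarrow> 'a) \<Rightarrow> 'b set \<Rightarrow> ('b \<Rightarrow> 'b \<Rightarrow> 'b) \<Rightarrow> bool" where
  "rack_iso X opX Y opY \<longleftrightarrow>
     (\<exists>f. bij_betw f X Y \<and> (\<forall>a\<in>X. \<forall>b\<in>X. f (opX a b) = opY (f a) (f b)))"

end

theory Submission
  imports Defs "HOL-Library.FuncSet"
begin

text \<open>Count the injective homomorphisms from the connected rack \<open>S\<^sub>1\<close> into \<open>R\<close>. The image of a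
  connected rack under a homomorphism lies entirely in one part of a decomposition, so this count
  splits as \<open>#(S\<^sub>1 \<hookrightarrow> S\<^sub>1) + #(S\<^sub>1 \<hookrightarrow> T\<^sub>1) = #(S\<^sub>1 \<hookrightarrow> S\<^sub>2) + #(S\<^sub>1 \<hookrightarrow> T\<^sub>2)\<close>. Since \<open>T\<^sub>1 \<cong> T\<^sub>2\<close> the
  second summands agree, hence \<open>#(S\<^sub>1 \<hookrightarrow> S\<^sub>2) = #(S\<^sub>1 \<hookrightarrow> S\<^sub>1) > 0\<close>. By symmetry there are also
  embeddings \<open>S\<^sub>2 \<hookrightarrow> S\<^sub>1\<close>, and injections both ways between finite sets are bijections.\<close>

text \<open>Maps are taken extensional on \<open>C\<close>, so that embeddings into a finite set form a finite set.\<close>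
definition rack_embeddings :: "'a set \<Rightarrow> 'b set \<Rightarrow> ('a \<Rightarrow> 'a \<Rightarrow> 'a) \<Rightarrow> ('b \<Rightarrow> 'b \<Rightarrow> 'b) \<Rightarrow> ('a \<Rightarrow> 'b) set"
  where "rack_embeddings C X opC opX = {f. f \<in> extensional C \<and> inj_on f C \<and> f ` C \<subseteq> X \<and>
      (\<forall>a\<in>C. \<forall>b\<in>C. f (opC a b) = opX (f a) (f b))}"

lemma rack_closed:
  assumes "rack X op" "a \<in> X" "b \<in> X"
  shows "op a b \<in> X"
  using assms unfolding rack_def bij_betw_def by blast

lemma subrack_rack:
  assumes "rack R op" "subrack R op S"
  shows "rack S op"
proof -
  have "S \<subseteq> R" and image: "\<forall>s\<in>S. op s ` S = S"
    using assms(2) unfolding subrack_def by auto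
  then have "inj_on (op s) S" if "s \<in> S" for s
    using assms(1) that unfolding rack_def bij_betw_def by (meson inj_on_subset subsetD)
  then show ?thesis
    using assms(1) image \<open>S \<subseteq> R\<close> unfolding rack_def bij_betw_def by (meson subsetD)
qed

lemma decomposition_sym: "decomposition R op A B \<Longrightarrow> decomposition R op B A"
  unfolding decomposition_def by auto

lemma decomposition_rack:
  assumes "rack R op" "decomposition R op A B"
  shows "rack A op"
  using assms subrack_rack unfolding decomposition_def by blast

lemma decompositionD:
  assumes "decomposition R op A B"
  shows "R = A \<union> B" "A \<inter> B = {}" "\<And>s. s \<in> A \<Longrightarrow> op s ` A = A" "\<And>s. s \<in> B \<Longrightarrow> op s ` B = B"
  using assms unfolding decomposition_def subrack_def by auto

lemma decomposition_left_mult_closed: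
  assumes "rack R op" "decomposition R op A B" "r \<in> R" "x \<in> A"
  shows "op r x \<in> A"
proof (cases "r \<in> A")
  case True
  then show ?thesis using decompositionD(3)[OF assms(2)] assms(4) by blast
next
  case False
  note parts = decompositionD(1,2)[OF assms(2)]
  have "r \<in> B" "x \<in> R" using False assms(3,4) parts(1) by auto
  have inj: "inj_on (op r) R" using assms(1,3) unfolding rack_def bij_betw_def by blast
  show ?thesis
  proof (rule ccontr)
    assume "op r x \<notin> A"
    then have "op r x \<in> op r ` B"
      using rack_closed[OF assms(1,3) \<open>x \<in> R\<close>] parts(1) decompositionD(4)[OF assms(2) \<open>r \<in> B\<close>]
      by blast
    then obtain b where "b \<in> B" "op r x = op r b" by blast
    then have "x = b" using inj_onD[OF inj] \<open>x \<in> R\<close> parts(1) by blast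
    then show False using \<open>b \<in> B\<close> assms(4) parts(2) by blast
  qed
qed

lemma decomposition_left_mult_iff:
  assumes "rack R op" "decomposition R op A B" "r \<in> R" "x \<in> R"
  shows "op r x \<in> A \<longleftrightarrow> x \<in> A"
proof
  assume "op r x \<in> A"
  then show "x \<in> A"
    using decomposition_left_mult_closed[OF assms(1) decomposition_sym[OF assms(2)] assms(3)]
      decompositionD(1,2)[OF assms(2)] assms(4) by blast
qed (use decomposition_left_mult_closed[OF assms(1-3)] in blast)

lemma inn_orbit_invariant:
  assumes "rack C op" and invariant: "\<And>a y. a \<in> C \<Longrightarrow> y \<in> C \<Longrightarrow> P (op a y) \<longleftrightarrow> P y"
    and "P x" "y \<in> inn_orbit C op x"
  shows "y \<in> C \<and> P y"
  using assms(4)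
proof (induction rule: inn_orbit.induct)
  case base
  then show ?case using \<open>P x\<close> by blast
next
  case (left y a)
  then show ?case using rack_closed[OF assms(1)] invariant by blast
next
  case (left_inv y a)
  then have bij: "bij_betw (op a) C C" using assms(1) unfolding rack_def by blast
  let ?z = "the_inv_into C (op a) y"
  have "?z \<in> C" "op a ?z = y"
    using bij left_inv.IH by (auto simp: bij_betw_def the_inv_into_into f_the_inv_into_f)
  then show ?case using invariant left_inv by metis
qed

text \<open>The parts of a decomposition are unions of \<open>Inn(R)\<close>-orbits, and a homomorphism maps
  \<open>Inn(C)\<close>-orbits into \<open>Inn(R)\<close>-orbits.\<close>
lemma connected_hom_image_in_one_part:
  assumes "rack R op" "decomposition R op A B" "rack C op" "connected_rack C op"
    and h: "h ` C \<subseteq> R" "\<forall>a\<in>C. \<forall>b\<in>C. h (op a b) = op (h a) (h b)"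
  shows "h ` C \<subseteq> A \<or> h ` C \<subseteq> B"
proof -
  obtain c0 where "c0 \<in> C" using assms(4) unfolding connected_rack_def by blast
  have "h y \<in> A \<longleftrightarrow> h c0 \<in> A" if "y \<in> C" for y
  proof -
    have "h (op a z) \<in> A \<longleftrightarrow> h z \<in> A" if "a \<in> C" "z \<in> C" for a z
      using decomposition_left_mult_iff[OF assms(1,2)] h that by auto
    moreover have "y \<in> inn_orbit C op c0"
      using assms(4) \<open>c0 \<in> C\<close> that unfolding connected_rack_def by blast
    ultimately show ?thesis
      using inn_orbit_invariant[OF assms(3), where P = "\<lambda>y. h y \<in> A \<longleftrightarrow> h c0 \<in> A"] by blast
  qed
  then show ?thesis using h(1) decompositionD(1)[OF assms(2)] by blast
qed

lemma finite_rack_embeddings: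
  assumes "finite C" "finite X"
  shows "finite (rack_embeddings C X opC opX)"
proof (rule finite_subset)
  show "rack_embeddings C X opC opX \<subseteq> C \<rightarrow>\<^sub>E X" unfolding rack_embeddings_def PiE_def by auto
qed (use assms in \<open>simp add: finite_PiE\<close>)

lemma rack_embeddings_mono:
  "X \<subseteq> Y \<Longrightarrow> rack_embeddings C X opC opX \<subseteq> rack_embeddings C Y opC opX"
  unfolding rack_embeddings_def by blast

lemma card_rack_embeddings_decomposition:
  assumes "rack R op" "finite R" "decomposition R op A B" "rack C op" "connected_rack C op"
    "finite C"
  shows "card (rack_embeddings C R op op) =
    card (rack_embeddings C A op op) + card (rack_embeddings C B op op)"
proof -
  have parts: "A \<subseteq> R" "B \<subseteq> R" "A \<inter> B = {}" "A \<union> B = R"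
    using assms(3) unfolding decomposition_def subrack_def by auto
  have "rack_embeddings C R op op = rack_embeddings C A op op \<union> rack_embeddings C B op op"
  proof
    show "rack_embeddings C R op op \<subseteq> rack_embeddings C A op op \<union> rack_embeddings C B op op"
      using connected_hom_image_in_one_part[OF assms(1,3-5)] unfolding rack_embeddings_def by blast
  qed (use rack_embeddings_mono parts in blast)
  moreover have "rack_embeddings C A op op \<inter> rack_embeddings C B op op = {}"
  proof -
    obtain c where "c \<in> C" using assms(5) unfolding connected_rack_def by blast
    then show ?thesis using parts(3) unfolding rack_embeddings_def by blast
  qed
  moreover have "finite (rack_embeddings C A op op)" "finite (rack_embeddings C B op op)"
    using finite_rack_embeddings assms(2,6) parts(1,2) finite_subset by metis+
  ultimately show ?thesis by (simp add: card_Un_disjoint)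
qed

lemma restrict_comp_rack_embeddings:
  assumes "rack C opC" "g \<in> rack_embeddings X Y opX opY" "f \<in> rack_embeddings C X opC opX"
  shows "restrict (g \<circ> f) C \<in> rack_embeddings C Y opC opY"
proof -
  have f: "inj_on f C" "f ` C \<subseteq> X" "\<forall>a\<in>C. \<forall>b\<in>C. f (opC a b) = opX (f a) (f b)"
    and g: "inj_on g X" "g ` X \<subseteq> Y" "\<forall>a\<in>X. \<forall>b\<in>X. g (opX a b) = opY (g a) (g b)"
    using assms(2,3) unfolding rack_embeddings_def by auto
  have "inj_on (g \<circ> f) C" using f g by (simp add: comp_inj_on inj_on_subset)
  moreover have "(g \<circ> f) (opC a b) = opY ((g \<circ> f) a) ((g \<circ> f) b)" if "a \<in> C" "b \<in> C" for a b
  proof -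
    have "f a \<in> X" "f b \<in> X" using f(2) that by auto
    then show ?thesis using f(3) g(3) that by simp
  qed
  ultimately show ?thesis
    using f(2) g(2) rack_closed[OF assms(1)] unfolding rack_embeddings_def
    by (auto simp: inj_on_def image_subset_iff)
qed

lemma card_rack_embeddings_le:
  assumes "rack C opC" "finite (rack_embeddings C Y opC opY)"
    and g: "g \<in> rack_embeddings X Y opX opY"
  shows "card (rack_embeddings C X opC opX) \<le> card (rack_embeddings C Y opC opY)"
proof (rule card_inj_on_le[OF _ _ assms(2)])
  let ?compose = "\<lambda>f. restrict (g \<circ> f) C"
  show "?compose ` rack_embeddings C X opC opX \<subseteq> rack_embeddings C Y opC opY"
    using restrict_comp_rack_embeddings[OF assms(1) g] by blast
  show "inj_on ?compose (rack_embeddings C X opC opX)"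
  proof (rule inj_onI)
    fix f1 f2
    assume f: "f1 \<in> rack_embeddings C X opC opX" "f2 \<in> rack_embeddings C X opC opX"
      and eq: "?compose f1 = ?compose f2"
    have "f1 x = f2 x" if "x \<in> C" for x
    proof -
      have "g (f1 x) = g (f2 x)" using eq that by (metis comp_apply restrict_apply')
      moreover have "f1 x \<in> X" "f2 x \<in> X" using f that unfolding rack_embeddings_def by auto
      moreover have "inj_on g X" using g unfolding rack_embeddings_def by simp
      ultimately show ?thesis by (simp add: inj_on_eq_iff)
    qed
    moreover have "f1 \<in> extensional C" "f2 \<in> extensional C"
      using f unfolding rack_embeddings_def by simp_all
    ultimately show "f1 = f2" by (simp add: extensionalityI)
  qed
qed

lemma rack_iso_embedding:
  assumes "rack X opX" "rack_iso X opX Y opY"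
  obtains g where "g \<in> rack_embeddings X Y opX opY"
proof -
  obtain g where "bij_betw g X Y" "\<forall>a\<in>X. \<forall>b\<in>X. g (opX a b) = opY (g a) (g b)"
    using assms(2) unfolding rack_iso_def by blast
  then have "restrict g X \<in> rack_embeddings X Y opX opY"
    using rack_closed[OF assms(1)] unfolding rack_embeddings_def bij_betw_def inj_on_def by auto
  then show thesis using that by blast
qed

lemma rack_iso_sym:
  assumes "rack X opX" "rack_iso X opX Y opY"
  shows "rack_iso Y opY X opX"
proof -
  obtain g where g: "bij_betw g X Y" "\<forall>a\<in>X. \<forall>b\<in>X. g (opX a b) = opY (g a) (g b)"
    using assms(2) unfolding rack_iso_def by blast
  let ?g' = "inv_into X g"
  have "?g' (opY a b) = opX (?g' a) (?g' b)" if "a \<in> Y" "b \<in> Y" for a b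
  proof -
    have "?g' a \<in> X" "?g' b \<in> X" "g (?g' a) = a" "g (?g' b) = b"
      using that g(1) by (auto simp: bij_betw_def inv_into_into f_inv_into_f)
    then have "opY a b = g (opX (?g' a) (?g' b))" using g(2) by metis
    then show ?thesis
      using g(1) rack_closed[OF assms(1) \<open>?g' a \<in> X\<close> \<open>?g' b \<in> X\<close>]
      by (simp add: bij_betw_def inv_into_f_f)
  qed
  then show ?thesis using bij_betw_inv_into[OF g(1)] unfolding rack_iso_def by blast
qed

lemma card_rack_embeddings_iso:
  assumes "rack C opC" "finite C" "rack X opX" "rack Y opY" "finite X" "finite Y"
    and "rack_iso X opX Y opY"
  shows "card (rack_embeddings C X opC opX) = card (rack_embeddings C Y opC opY)"
proof (rule antisym)
  obtain g where "g \<in> rack_embeddings X Y opX opY"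
    using assms(3,7) by (rule rack_iso_embedding)
  then show "card (rack_embeddings C X opC opX) \<le> card (rack_embeddings C Y opC opY)"
    using card_rack_embeddings_le[OF assms(1) finite_rack_embeddings[OF assms(2,6)]] by blast
  obtain g' where "g' \<in> rack_embeddings Y X opY opX"
    using assms(4) rack_iso_sym[OF assms(3,7)] by (rule rack_iso_embedding)
  then show "card (rack_embeddings C Y opC opY) \<le> card (rack_embeddings C X opC opX)"
    using card_rack_embeddings_le[OF assms(1) finite_rack_embeddings[OF assms(2,5)]] by blast
qed

lemma restrict_id_rack_embeddings:
  "rack C op \<Longrightarrow> restrict id C \<in> rack_embeddings C C op op"
  unfolding rack_embeddings_def by (auto simp: inj_on_def rack_closed)

lemma rack_embeddings_nonempty_of_iso_complements:
  assumes "rack R op" "finite R"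
    and d1: "decomposition R op S1 T1" and d2: "decomposition R op S2 T2"
    and "rack_iso T1 op T2 op" "connected_rack S1 op"
  shows "rack_embeddings S1 S2 op op \<noteq> {}"
proof -
  have racks: "rack S1 op" "rack T1 op" "rack T2 op"
    using decomposition_rack[OF assms(1)] d1 d2 decomposition_sym by blast+
  have finite: "finite S1" "finite S2" "finite T1" "finite T2"
    using assms(2) decompositionD(1)[OF d1] decompositionD(1)[OF d2] by (metis finite_Un)+
  have "card (rack_embeddings S1 S1 op op) + card (rack_embeddings S1 T1 op op) =
    card (rack_embeddings S1 S2 op op) + card (rack_embeddings S1 T2 op op)"
    using card_rack_embeddings_decomposition[OF assms(1,2) _ racks(1) assms(6) finite(1)] d1 d2
    by metis
  moreover have "card (rack_embeddings S1 T1 op op) = card (rack_embeddings S1 T2 op op)"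
    using card_rack_embeddings_iso[OF racks(1) finite(1) racks(2,3) finite(3,4) assms(5)] .
  moreover have "card (rack_embeddings S1 S1 op op) > 0"
    using restrict_id_rack_embeddings[OF racks(1)] finite_rack_embeddings[OF finite(1,1)]
    by (metis card_gt_0_iff empty_iff)
  ultimately show ?thesis by fastforce
qed

lemma rack_iso_of_embeddings:
  assumes "finite X" "finite Y"
    and "f \<in> rack_embeddings X Y opX opY" "g \<in> rack_embeddings Y X opY opX"
  shows "rack_iso X opX Y opY"
proof -
  have f: "inj_on f X" "f ` X \<subseteq> Y" "\<forall>a\<in>X. \<forall>b\<in>X. f (opX a b) = opY (f a) (f b)"
    using assms(3) unfolding rack_embeddings_def by blast+
  have "card Y \<le> card X"
    using assms(1,4) unfolding rack_embeddings_def by (blast intro: card_inj_on_le)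
  then have "f ` X = Y"
    using f(1,2) assms(2) by (metis card_image card_seteq)
  then show ?thesis using f unfolding rack_iso_def bij_betw_def by blast
qed

theorem corollary4p3:
  fixes R :: "'a set" and op :: "'a \<Rightarrow> 'a \<Rightarrow> 'a" and S1 T1 S2 T2 :: "'a set"
  assumes "rack R op" and "finite R"
    and "decomposition R op S1 T1" and "decomposition R op S2 T2"
    and "rack_iso T1 op T2 op"
    and "connected_rack S1 op" and "connected_rack S2 op"
  shows "rack_iso S1 op S2 op"
proof -
  have "rack_iso T2 op T1 op"
    using rack_iso_sym[OF decomposition_rack[OF assms(1) decomposition_sym[OF assms(3)]] assms(5)] .
  then have "rack_embeddings S1 S2 op op \<noteq> {}" "rack_embeddings S2 S1 op op \<noteq> {}"
    using rack_embeddings_nonempty_of_iso_complements assms by blast+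
  moreover have "finite S1" "finite S2"
    using assms(2) decompositionD(1)[OF assms(3)] decompositionD(1)[OF assms(4)] by (metis finite_Un)+
  ultimately show ?thesis using rack_iso_of_embeddings by blast
qed

end
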